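(* Let $S$ be a nonempty complete lattice and let $F:S\to 2^S$ be a V-ascending correspondence. Suppose that for every $x\in S$, the subset $F(x)$ is nonempty and chain-subcomplete in $S$. Then $\mathrm{Fix}(F)=\{s\in S: s\in F(s)\}$, with the order induced from $S$, is a nonempty complete lattice.
   Context: A poset $S$ is a complete lattice if every nonempty subset $A\subset S$ has a supremum $\sup_S A$ and an infimum $\inf_S A$ in $S$. A subset $T$ of a poset $S$ is chain-subcomplete upwards (resp. downwards) in $S$ if for every nonempty chain $C\subset T$, $\sup_S C$ (resp. $\inf_S C$) exists and belongs to $T$; it is chain-subcomplete in $S$ if it is both. For a lattice $S$ and a correspondence $F:S\to 2^S$: $F$ is lower V-ascending if for all $x<x'$ in $S$ (strict inequality), every $y\in F(x)$ and every $y'\in F(x')$, one has $y\wedge y'\in F(x)$; $F$ is upper V-ascending if under the same conditions $y\vee y'\in F(x')$; $F$ is V-ascending if it is both upper and lower V-ascending. *)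

theory Defs
  imports Main
begin

text \<open>The ambient nonempty complete lattice S is modelled as a type of class
complete_lattice (S = UNIV). Correspondences F : S -> 2^S are functions 'a => 'a set.\<close>

definition lower_V_ascending :: "('a::lattice \<Rightarrow> 'a set) \<Rightarrow> bool" where
  "lower_V_ascending F \<longleftrightarrow>
     (\<forall>x x'. x < x' \<longrightarrow> (\<forall>y\<in>F x. \<forall>y'\<in>F x'. inf y y' \<in> F x))"

definition upper_V_ascending :: "('a::lattice \<Rightarrow> 'a set) \<Rightarrow> bool" where
  "upper_V_ascending F \<longleftrightarrow>
     (\<forall>x x'. x < x' \<longrightarrow> (\<forall>y\<in>F x. \<forall>y'\<in>F x'. sup y y' \<in> F x'))"

definition V_ascending :: "('a::lattice \<Rightarrow> 'a set) \<Rightarrow> bool" where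
  "V_ascending F \<longleftrightarrow> upper_V_ascending F \<and> lower_V_ascending F"

definition chain_subcomplete_up :: "'a::complete_lattice set \<Rightarrow> bool" where
  "chain_subcomplete_up T \<longleftrightarrow>
     (\<forall>C. C \<noteq> {} \<and> C \<subseteq> T \<and> Complete_Partial_Order.chain (\<le>) C \<longrightarrow> Sup C \<in> T)"

definition chain_subcomplete_down :: "'a::complete_lattice set \<Rightarrow> bool" where
  "chain_subcomplete_down T \<longleftrightarrow>
     (\<forall>C. C \<noteq> {} \<and> C \<subseteq> T \<and> Complete_Partial_Order.chain (\<le>) C \<longrightarrow> Inf C \<in> T)"

definition chain_subcomplete :: "'a::complete_lattice set \<Rightarrow> bool" where
  "chain_subcomplete T \<longleftrightarrow> chain_subcomplete_up T \<and> chain_subcomplete_down T"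

definition Fix :: "('a \<Rightarrow> 'a set) \<Rightarrow> 'a set" where
  "Fix F = {s. s \<in> F s}"

definition is_sup_in :: "'a::order set \<Rightarrow> 'a set \<Rightarrow> 'a \<Rightarrow> bool" where
  "is_sup_in T A s \<longleftrightarrow> s \<in> T \<and> (\<forall>a\<in>A. a \<le> s) \<and> (\<forall>t\<in>T. (\<forall>a\<in>A. a \<le> t) \<longrightarrow> s \<le> t)"

definition is_inf_in :: "'a::order set \<Rightarrow> 'a set \<Rightarrow> 'a \<Rightarrow> bool" where
  "is_inf_in T A s \<longleftrightarrow> s \<in> T \<and> (\<forall>a\<in>A. s \<le> a) \<and> (\<forall>t\<in>T. (\<forall>a\<in>A. t \<le> a) \<longrightarrow> t \<le> s)"

definition complete_lattice_in :: "'a::order set \<Rightarrow> bool" where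
  "complete_lattice_in T \<longleftrightarrow>
     (\<forall>A. A \<noteq> {} \<and> A \<subseteq> T \<longrightarrow> (\<exists>s. is_sup_in T A s) \<and> (\<exists>i. is_inf_in T A i))"

end

theory Submission imports Defs begin

text \<open>If A and B are sets of fixpoints with A below B, there is a fixpoint between Sup A and
  Inf B. Indeed, every F x with x in this interval meets the interval: a maximal element m of F x
  lies above A by upper V-ascendence, and a minimal element of F x between Sup A and m lies below
  B by lower V-ascendence. Zorn's lemma, applied to the points x of the interval lying below some
  value of F x within it, then yields a maximal such point, and it is a fixpoint. Choosing B as
  the fixpoints above a given A (or A as those below a given B) gives suprema and infima in Fix F,
  and A = B = {} gives nonemptiness.\<close>

lemma chain_subcomplete_up_has_maximal:
  fixes T :: "'a::complete_lattice set"
  assumes "chain_subcomplete_up T" and "T \<noteq> {}"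
  shows "\<exists>m\<in>T. \<forall>a\<in>T. m \<le> a \<longrightarrow> a = m"
proof (rule predicate_Zorn)
  show "partial_order_on T (relation_of (\<le>) T)"
    by (rule partial_order_on_relation_ofI) auto
next
  fix C assume "C \<in> Chains (relation_of (\<le>) T)"
  then have "C \<subseteq> T" and "Complete_Partial_Order.chain (\<le>) C"
    unfolding Chains_def relation_of_def Complete_Partial_Order.chain_def by auto
  then show "\<exists>u\<in>T. \<forall>a\<in>C. a \<le> u"
    using assms by (cases "C = {}") (auto simp: chain_subcomplete_up_def intro: Sup_upper)
qed

lemma chain_subcomplete_down_has_minimal:
  fixes T :: "'a::complete_lattice set"
  assumes "chain_subcomplete_down T" and "T \<noteq> {}"
  shows "\<exists>m\<in>T. \<forall>a\<in>T. a \<le> m \<longrightarrow> a = m"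
proof (rule predicate_Zorn[where P = "(\<ge>)"])
  show "partial_order_on T (relation_of (\<ge>) T)"
    by (rule partial_order_on_relation_ofI) auto
next
  fix C assume "C \<in> Chains (relation_of (\<ge>) T)"
  then have "C \<subseteq> T" and "Complete_Partial_Order.chain (\<le>) C"
    unfolding Chains_def relation_of_def Complete_Partial_Order.chain_def by auto
  then show "\<exists>u\<in>T. \<forall>a\<in>C. u \<le> a"
    using assms by (cases "C = {}") (auto simp: chain_subcomplete_down_def intro: Inf_lower)
qed

lemma chain_subcomplete_up_Int_interval:
  fixes T :: "'a::complete_lattice set"
  assumes "chain_subcomplete_up T"
  shows "chain_subcomplete_up (T \<inter> {a..b})"
  unfolding chain_subcomplete_up_def
proof (intro allI impI)
  fix C assume C: "C \<noteq> {} \<and> C \<subseteq> T \<inter> {a..b} \<and> Complete_Partial_Order.chain (\<le>) C"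
  then obtain c where "c \<in> C" by blast
  then have "a \<le> Sup C" using C by (meson IntD2 Sup_upper atLeastAtMost_iff order_trans subsetD)
  moreover have "Sup C \<le> b" using C by (auto intro!: Sup_least)
  ultimately show "Sup C \<in> T \<inter> {a..b}"
    using C assms by (auto simp: chain_subcomplete_up_def)
qed

lemma chain_subcomplete_down_Int_interval:
  fixes T :: "'a::complete_lattice set"
  assumes "chain_subcomplete_down T"
  shows "chain_subcomplete_down (T \<inter> {a..b})"
  unfolding chain_subcomplete_down_def
proof (intro allI impI)
  fix C assume C: "C \<noteq> {} \<and> C \<subseteq> T \<inter> {a..b} \<and> Complete_Partial_Order.chain (\<le>) C"
  then obtain c where "c \<in> C" by blast
  then have "Inf C \<le> b" using C by (meson IntD2 Inf_lower atLeastAtMost_iff order_trans subsetD)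
  moreover have "a \<le> Inf C" using C by (auto intro!: Inf_greatest)
  ultimately show "Inf C \<in> T \<inter> {a..b}"
    using C assms by (auto simp: chain_subcomplete_down_def)
qed

definition sub_fixpoints_in :: "('a::order \<Rightarrow> 'a set) \<Rightarrow> 'a \<Rightarrow> 'a \<Rightarrow> 'a set" where
  "sub_fixpoints_in F l u = {x \<in> {l..u}. \<exists>y \<in> F x \<inter> {l..u}. x \<le> y}"

text \<open>If Sup C \<notin> C, every x \<in> C lies strictly below Sup C, so by upper V-ascendence a
  maximal value of F (Sup C) in the interval dominates the witnesses of all x \<in> C.\<close>
lemma chain_subcomplete_up_sub_fixpoints_in:
  fixes F :: "'a::complete_lattice \<Rightarrow> 'a set"
  assumes up: "upper_V_ascending F"
    and complete: "\<And>x. chain_subcomplete_up (F x)"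
    and meets: "\<And>x. x \<in> {l..u} \<Longrightarrow> F x \<inter> {l..u} \<noteq> {}"
  shows "chain_subcomplete_up (sub_fixpoints_in F l u)"
  unfolding chain_subcomplete_up_def
proof (intro allI impI)
  fix C assume C: "C \<noteq> {} \<and> C \<subseteq> sub_fixpoints_in F l u \<and> Complete_Partial_Order.chain (\<le>) C"
  then obtain c where "c \<in> C" by blast
  then have c_interval: "Sup C \<in> {l..u}"
    using C by (auto simp: sub_fixpoints_in_def intro: order_trans Sup_upper Sup_least)
  show "Sup C \<in> sub_fixpoints_in F l u"
  proof (cases "Sup C \<in> C")
    case True
    then show ?thesis using C by blast
  next
    case False
    obtain m where m: "m \<in> F (Sup C) \<inter> {l..u}"
      and m_max: "\<forall>a \<in> F (Sup C) \<inter> {l..u}. m \<le> a \<longrightarrow> a = m"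
      using chain_subcomplete_up_has_maximal[OF chain_subcomplete_up_Int_interval[OF complete]]
        meets[OF c_interval] by blast
    have "x \<le> m" if "x \<in> C" for x
    proof -
      obtain y where y: "y \<in> F x \<inter> {l..u}" "x \<le> y"
        using \<open>x \<in> C\<close> C unfolding sub_fixpoints_in_def by blast
      have "x < Sup C" using \<open>x \<in> C\<close> False by (metis Sup_upper order_less_le)
      then have "sup y m \<in> F (Sup C) \<inter> {l..u}"
        using up y m by (auto simp: upper_V_ascending_def intro: le_supI2)
      then have "sup y m = m" using m_max by simp
      then show "x \<le> m" using y(2) by (metis le_iff_sup order_trans)
    qed
    then have "Sup C \<le> m" by (rule Sup_least)
    then show ?thesis using c_interval m by (auto simp: sub_fixpoints_in_def)
  qed
qed

text \<open>A maximal element x of the sub-fixpoints with witness y \<ge> x is a fixpoint: otherwise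
  x < y, and joining y with any value of F y in the interval shows that y is a sub-fixpoint
  above x.\<close>
lemma fixpoint_in_interval:
  fixes F :: "'a::complete_lattice \<Rightarrow> 'a set"
  assumes up: "upper_V_ascending F"
    and complete: "\<And>x. chain_subcomplete_up (F x)"
    and "l \<le> u"
    and meets: "\<And>x. x \<in> {l..u} \<Longrightarrow> F x \<inter> {l..u} \<noteq> {}"
  shows "\<exists>p \<in> {l..u}. p \<in> F p"
proof -
  have "l \<in> sub_fixpoints_in F l u"
    using meets[of l] \<open>l \<le> u\<close> by (auto simp: sub_fixpoints_in_def)
  then obtain x where x: "x \<in> sub_fixpoints_in F l u"
    and x_max: "\<forall>a \<in> sub_fixpoints_in F l u. x \<le> a \<longrightarrow> a = x"
    using chain_subcomplete_up_has_maximal[OF chain_subcomplete_up_sub_fixpoints_in[OF up complete meets]]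
    by blast
  then obtain y where y: "y \<in> F x" "y \<in> {l..u}" "x \<le> y"
    by (auto simp: sub_fixpoints_in_def)
  have "y = x"
  proof (rule ccontr)
    assume "y \<noteq> x"
    with y(3) have "x < y" by simp
    obtain z where z: "z \<in> F y" "z \<in> {l..u}" using meets[OF y(2)] by blast
    have "sup y z \<in> F y" using up \<open>x < y\<close> y(1) z(1) by (auto simp: upper_V_ascending_def)
    then have "y \<in> sub_fixpoints_in F l u"
      using y(2) z(2) by (auto simp: sub_fixpoints_in_def intro!: bexI[where x = "sup y z"] le_supI1)
    then show False using x_max y(3) \<open>y \<noteq> x\<close> by blast
  qed
  then show ?thesis using y by auto
qed

lemma V_ascending_meets_interval_between_fixpoints:
  fixes F :: "'a::complete_lattice \<Rightarrow> 'a set"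
  assumes "V_ascending F"
    and nonempty: "\<And>x. F x \<noteq> {}"
    and complete: "\<And>x. chain_subcomplete (F x)"
    and A: "A \<subseteq> Fix F" and B: "B \<subseteq> Fix F"
    and x: "x \<in> {Sup A..Inf B}"
  shows "F x \<inter> {Sup A..Inf B} \<noteq> {}"
proof (cases "x \<in> A \<union> B")
  case True
  then show ?thesis using A B x by (auto simp: Fix_def)
next
  case False
  have up: "upper_V_ascending F" and low: "lower_V_ascending F"
    using \<open>V_ascending F\<close> by (auto simp: V_ascending_def)
  have complete_up: "chain_subcomplete_up (F x)" and complete_down: "chain_subcomplete_down (F x)"
    using complete by (auto simp: chain_subcomplete_def)
  have below: "s < x" if "s \<in> A" for s
    using that x False Sup_upper[OF that] by (auto simp: order.strict_iff_order intro: order_trans)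
  have above: "x < t" if "t \<in> B" for t
    using that x False Inf_lower[OF that] by (auto simp: order.strict_iff_order intro: order_trans)
  obtain m where m: "m \<in> F x" and m_max: "\<forall>a \<in> F x. m \<le> a \<longrightarrow> a = m"
    using chain_subcomplete_up_has_maximal[OF complete_up nonempty] by blast
  have "s \<le> m" if "s \<in> A" for s
  proof -
    have "sup s m \<in> F x"
      using up below[OF that] A that m by (auto simp: upper_V_ascending_def Fix_def)
    then have "sup s m = m" using m_max by simp
    then show ?thesis by (simp add: le_iff_sup)
  qed
  then have "Sup A \<le> m" by (rule Sup_least)
  then have "F x \<inter> {Sup A..m} \<noteq> {}" using m by auto
  then obtain n where n: "n \<in> F x \<inter> {Sup A..m}"
    and n_min: "\<forall>a \<in> F x \<inter> {Sup A..m}. a \<le> n \<longrightarrow> a = n"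
    using chain_subcomplete_down_has_minimal[OF chain_subcomplete_down_Int_interval[OF complete_down]]
    by blast
  have "n \<le> t" if "t \<in> B" for t
  proof -
    have "inf n t \<in> F x"
      using low above[OF that] B that n by (auto simp: lower_V_ascending_def Fix_def)
    moreover have "Sup A \<le> t" using x Inf_lower[OF that] by (auto intro: order_trans)
    ultimately have "inf n t \<in> F x \<inter> {Sup A..m}" using n by (auto intro: le_infI1)
    then have "inf n t = n" using n_min by simp
    then show ?thesis by (simp add: le_iff_inf)
  qed
  then have "n \<le> Inf B" by (rule Inf_greatest)
  then show ?thesis using n by auto
qed

lemma fixpoint_between:
  fixes F :: "'a::complete_lattice \<Rightarrow> 'a set"
  assumes "V_ascending F"
    and "\<And>x. F x \<noteq> {}"
    and complete: "\<And>x. chain_subcomplete (F x)"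
    and "A \<subseteq> Fix F" and "B \<subseteq> Fix F"
    and "\<And>s t. s \<in> A \<Longrightarrow> t \<in> B \<Longrightarrow> s \<le> t"
  shows "\<exists>p \<in> Fix F. Sup A \<le> p \<and> p \<le> Inf B"
proof -
  have "upper_V_ascending F" using \<open>V_ascending F\<close> by (simp add: V_ascending_def)
  moreover have "\<And>x. chain_subcomplete_up (F x)" using complete by (simp add: chain_subcomplete_def)
  moreover have "Sup A \<le> Inf B" using assms(6) by (meson Inf_greatest Sup_least)
  ultimately obtain p where "p \<in> {Sup A..Inf B}" "p \<in> F p"
    using fixpoint_in_interval V_ascending_meets_interval_between_fixpoints[OF assms(1-5)] by blast
  then show ?thesis by (auto simp: Fix_def)
qed

lemma complete_lattice_inI:
  fixes T :: "'a::complete_lattice set"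
  assumes between: "\<And>A B. A \<subseteq> T \<Longrightarrow> B \<subseteq> T \<Longrightarrow> (\<And>s t. s \<in> A \<Longrightarrow> t \<in> B \<Longrightarrow> s \<le> t)
      \<Longrightarrow> \<exists>p \<in> T. Sup A \<le> p \<and> p \<le> Inf B"
  shows "complete_lattice_in T"
  unfolding complete_lattice_in_def
proof (intro allI impI conjI)
  fix A assume "A \<noteq> {} \<and> A \<subseteq> T"
  define U where "U = {t \<in> T. \<forall>a\<in>A. a \<le> t}"
  have "\<exists>p \<in> T. Sup A \<le> p \<and> p \<le> Inf U"
    by (rule between) (use \<open>A \<noteq> {} \<and> A \<subseteq> T\<close> in \<open>auto simp: U_def\<close>)
  then obtain p where p: "p \<in> T" "Sup A \<le> p" "p \<le> Inf U" by blast
  have "is_sup_in T A p"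
    unfolding is_sup_in_def
  proof (intro conjI ballI impI)
    fix a assume "a \<in> A"
    show "a \<le> p" using Sup_upper[OF \<open>a \<in> A\<close>] p(2) by (rule order_trans)
  next
    fix t assume "t \<in> T" "\<forall>a\<in>A. a \<le> t"
    then have "t \<in> U" by (simp add: U_def)
    show "p \<le> t" using p(3) Inf_lower[OF \<open>t \<in> U\<close>] by (rule order_trans)
  qed (use p in simp)
  then show "\<exists>s. is_sup_in T A s" ..
next
  fix A assume "A \<noteq> {} \<and> A \<subseteq> T"
  define L where "L = {t \<in> T. \<forall>a\<in>A. t \<le> a}"
  have "\<exists>p \<in> T. Sup L \<le> p \<and> p \<le> Inf A"
    by (rule between) (use \<open>A \<noteq> {} \<and> A \<subseteq> T\<close> in \<open>auto simp: L_def\<close>)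
  then obtain p where p: "p \<in> T" "Sup L \<le> p" "p \<le> Inf A" by blast
  have "is_inf_in T A p"
    unfolding is_inf_in_def
  proof (intro conjI ballI impI)
    fix a assume "a \<in> A"
    show "p \<le> a" using p(3) Inf_lower[OF \<open>a \<in> A\<close>] by (rule order_trans)
  next
    fix t assume "t \<in> T" "\<forall>a\<in>A. t \<le> a"
    then have "t \<in> L" by (simp add: L_def)
    show "t \<le> p" using Sup_upper[OF \<open>t \<in> L\<close>] p(2) by (rule order_trans)
  qed (use p in simp)
  then show "\<exists>i. is_inf_in T A i" ..
qed

theorem theorem1p2:
  fixes F :: "'a::complete_lattice \<Rightarrow> 'a set"
  assumes "V_ascending F"
    and "\<And>x. F x \<noteq> {}"
    and "\<And>x. chain_subcomplete (F x)"
  shows "Fix F \<noteq> {} \<and> complete_lattice_in (Fix F)"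
proof
  show "Fix F \<noteq> {}"
    using fixpoint_between[OF assms, of "{}" "{}"] by auto
  show "complete_lattice_in (Fix F)"
    by (rule complete_lattice_inI) (rule fixpoint_between[OF assms])
qed

end
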